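(* Let $\boldsymbol{d}$ be a graphical degree sequence with minimum degree at least $3$. Let $(G,H)$ be a switch on $\mathcal{G}(n,\boldsymbol{d})$ which removes the edges $a_1a_2,a_3a_4$ and inserts the edges $a_1a_3,a_2a_4$. Let $D=\{a_1,a_2,a_3,a_4\}$ and $A_i=N(a_i)\setminus D$ for $i\in[4]$. Suppose at least one of the following holds: (i) at least one of the diagonals $a_1a_4$, $a_2a_3$ is an edge of $G$; (ii) neither diagonal is an edge of $G$, and some pair of distinct elements of $D$ has a common neighbour in $[n]\setminus D$; (iii) for some $j\in[4]$ there is a triangle in $G$ on vertices $a_j,u,w$ with $\{u,w\}\cap D=\emptyset$ and $u\notin A_{5-j}$. Then there is a triangle-switch simulation path of length at most $4$ from $G$ to $H$.
   Context: $\mathcal{G}(n,\boldsymbol{d})$ is the set of labelled simple graphs on $[n]$ with vertex $i$ of degree $d_i$. A switch $(G,H)$ on $\mathcal{G}(n,\boldsymbol{d})$: $G\in\mathcal{G}(n,\boldsymbol{d})$, $F$ is a set of two vertex-disjoint edges of $G$ on vertex set $\{a_1,a_2,a_3,a_4\}$, $F'$ is a different perfect matching of these four vertices with $F'\cap(E(G)\setminus F)=\emptyset$, and $H$ has edge set $(E(G)\setminus F)\cup F'$. A triangle switch is a switch $(G,H)$ such that for some pair $aa'\in F\cup F'$, $a$ and $a'$ have a common neighbour in $G$ outside $\{a_1,a_2,a_3,a_4\}$. $N(a)$ denotes the neighbourhood of $a$ in $G$. A triangle-switch simulation path of length $\kappa$ from $G$ to $H$ is a sequence $G=X_0,X_1,\dots,X_\kappa=H$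 of graphs in $\mathcal{G}(n,\boldsymbol{d})$ such that each $(X_i,X_{i+1})$ is a triangle switch. *)

theory Defs
  imports Main
begin

text \<open>A labelled simple graph on [n] = {1..n} is represented by its edge set:
  a set of 2-element subsets of {1..n}.\<close>

type_synonym graph = "nat set set"

definition Gnd :: "nat \<Rightarrow> (nat \<Rightarrow> nat) \<Rightarrow> graph set" where
  "Gnd n d = {E. (\<forall>e\<in>E. e \<subseteq> {1..n} \<and> card e = 2)
               \<and> (\<forall>i\<in>{1..n}. card {e\<in>E. i \<in> e} = d i)}"

definition graphical :: "nat \<Rightarrow> (nat \<Rightarrow> nat) \<Rightarrow> bool" where
  "graphical n d \<longleftrightarrow> Gnd n d \<noteq> {}"

definition nbhd :: "graph \<Rightarrow> nat \<Rightarrow> nat set" where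
  "nbhd G a = {v. {a, v} \<in> G}"

definition perfect_matchings4 :: "nat \<Rightarrow> nat \<Rightarrow> nat \<Rightarrow> nat \<Rightarrow> nat set set set" where
  "perfect_matchings4 a1 a2 a3 a4 =
     {{{a1,a2},{a3,a4}}, {{a1,a3},{a2,a4}}, {{a1,a4},{a2,a3}}}"

definition switch_data :: "nat \<Rightarrow> (nat \<Rightarrow> nat) \<Rightarrow> graph \<Rightarrow> graph \<Rightarrow>
    nat \<Rightarrow> nat \<Rightarrow> nat \<Rightarrow> nat \<Rightarrow> nat set set \<Rightarrow> bool" where
  "switch_data n d G H a1 a2 a3 a4 F' \<longleftrightarrow>
     G \<in> Gnd n d \<and> H \<in> Gnd n d \<and> distinct [a1, a2, a3, a4] \<and>
     {{a1,a2},{a3,a4}} \<subseteq> G \<and>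
     F' \<in> perfect_matchings4 a1 a2 a3 a4 \<and> F' \<noteq> {{a1,a2},{a3,a4}} \<and>
     F' \<inter> (G - {{a1,a2},{a3,a4}}) = {} \<and>
     H = (G - {{a1,a2},{a3,a4}}) \<union> F'"

definition is_switch :: "nat \<Rightarrow> (nat \<Rightarrow> nat) \<Rightarrow> graph \<Rightarrow> graph \<Rightarrow> bool" where
  "is_switch n d G H \<longleftrightarrow> (\<exists>a1 a2 a3 a4 F'. switch_data n d G H a1 a2 a3 a4 F')"

definition triangle_switch :: "nat \<Rightarrow> (nat \<Rightarrow> nat) \<Rightarrow> graph \<Rightarrow> graph \<Rightarrow> bool" where
  "triangle_switch n d G H \<longleftrightarrow>
     (\<exists>a1 a2 a3 a4 F'. switch_data n d G H a1 a2 a3 a4 F' \<and>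
        (\<exists>p \<in> {{a1,a2},{a3,a4}} \<union> F'. \<exists>a a'. p = {a, a'} \<and>
           (\<exists>c. c \<notin> {a1,a2,a3,a4} \<and> c \<in> nbhd G a \<and> c \<in> nbhd G a')))"

definition ts_sim_path :: "nat \<Rightarrow> (nat \<Rightarrow> nat) \<Rightarrow> graph \<Rightarrow> graph \<Rightarrow> nat \<Rightarrow> (nat \<Rightarrow> graph) \<Rightarrow> bool" where
  "ts_sim_path n d G H \<kappa> X \<longleftrightarrow>
     X 0 = G \<and> X \<kappa> = H \<and> (\<forall>i\<le>\<kappa>. X i \<in> Gnd n d) \<and>
     (\<forall>i<\<kappa>. triangle_switch n d (X i) (X (Suc i)))"

end

theory Submission
  imports Defs
begin

(*
  A switch is simulated by at most three triangle switches, each step witnessed by a common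
  neighbour outside the four switched vertices D. A common neighbour c of two vertices of D
  makes the switch itself a triangle switch if the two vertices form a switch pair; if they
  form a diagonal, switch first onto the diagonals and then onto the target, c witnessing
  both steps. A triangle a_j u w with u not adjacent to a_(5-j) lets the switch be routed
  through the edge a_j u in two steps, both witnessed by w. If a diagonal is an edge, minimum
  degree 3 yields a neighbour z of a_3 outside D and, if needed, a neighbour y of z outside D:
  either the switch is routed through z, or it is conjugated by an auxiliary switch on two
  vertices of D and z, y, whose pairs are disjoint from the target's, so that undoing it
  afterwards leaves exactly the target switch.
*)

definition switch_graph :: "graph \<Rightarrow> nat \<Rightarrow> nat \<Rightarrow> nat \<Rightarrow> nat \<Rightarrow> graph" where
  "switch_graph G x1 x2 x3 x4 = (G - {{x1,x2},{x3,x4}}) \<union> {{x1,x3},{x2,x4}}"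

definition switchable :: "graph \<Rightarrow> nat \<Rightarrow> nat \<Rightarrow> nat \<Rightarrow> nat \<Rightarrow> bool" where
  "switchable G x1 x2 x3 x4 \<longleftrightarrow>
     distinct [x1,x2,x3,x4] \<and> {x1,x2} \<in> G \<and> {x3,x4} \<in> G \<and> {x1,x3} \<notin> G \<and> {x2,x4} \<notin> G"

definition switch_pairs :: "nat \<Rightarrow> nat \<Rightarrow> nat \<Rightarrow> nat \<Rightarrow> nat set set" where
  "switch_pairs x1 x2 x3 x4 = {{x1,x2},{x3,x4}} \<union> {{x1,x3},{x2,x4}}"

definition triangular :: "graph \<Rightarrow> nat \<Rightarrow> nat \<Rightarrow> nat \<Rightarrow> nat \<Rightarrow> bool" where
  "triangular G x1 x2 x3 x4 \<longleftrightarrow>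
     (\<exists>p \<in> switch_pairs x1 x2 x3 x4. \<exists>a a'. p = {a,a'} \<and>
        (\<exists>c. c \<notin> {x1,x2,x3,x4} \<and> c \<in> nbhd G a \<and> c \<in> nbhd G a'))"

definition ts_reachable :: "nat \<Rightarrow> (nat \<Rightarrow> nat) \<Rightarrow> nat \<Rightarrow> graph \<Rightarrow> graph \<Rightarrow> bool" where
  "ts_reachable n d m G H \<longleftrightarrow> (\<exists>\<kappa> X. \<kappa> \<le> m \<and> ts_sim_path n d G H \<kappa> X)"

lemma mem_switch_graph:
  "e \<in> switch_graph G x1 x2 x3 x4 \<longleftrightarrow>
     (e \<in> G \<and> e \<noteq> {x1,x2} \<and> e \<noteq> {x3,x4}) \<or> e = {x1,x3} \<or> e = {x2,x4}"
  unfolding switch_graph_def by auto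

lemma triangularI:
  assumes "{x,y} \<in> switch_pairs x1 x2 x3 x4" "c \<notin> {x1,x2,x3,x4}" "{x,c} \<in> G" "{y,c} \<in> G"
  shows "triangular G x1 x2 x3 x4"
  unfolding triangular_def nbhd_def using assms by blast

lemma switch_graph_swap: "switch_graph G x2 x1 x4 x3 = switch_graph G x1 x2 x3 x4"
  unfolding switch_graph_def by (simp add: insert_commute)

lemma switch_graph_rotate: "switch_graph G x3 x4 x1 x2 = switch_graph G x1 x2 x3 x4"
  unfolding switch_graph_def by (simp add: insert_commute)

lemma switchable_swap: "switchable G x1 x2 x3 x4 \<Longrightarrow> switchable G x2 x1 x4 x3"
  unfolding switchable_def by (auto simp: insert_commute)

lemma switchable_rotate: "switchable G x1 x2 x3 x4 \<Longrightarrow> switchable G x3 x4 x1 x2"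
  unfolding switchable_def by (auto simp: insert_commute)

lemma Gnd_edgeD: "G \<in> Gnd n d \<Longrightarrow> e \<in> G \<Longrightarrow> e \<subseteq> {1..n} \<and> card e = 2"
  unfolding Gnd_def by auto

lemma Gnd_degree: "G \<in> Gnd n d \<Longrightarrow> i \<in> {1..n} \<Longrightarrow> card {e \<in> G. i \<in> e} = d i"
  unfolding Gnd_def by auto

lemma Gnd_edge_neq: "G \<in> Gnd n d \<Longrightarrow> {v,w} \<in> G \<Longrightarrow> v \<noteq> w"
  using Gnd_edgeD[of G n d "{v}"] by auto

lemma Gnd_finite: "G \<in> Gnd n d \<Longrightarrow> finite G"
  by (metis Gnd_edgeD PowI finite_Pow_iff finite_atLeastAtMost finite_subset subsetI)

lemma exists_nbr_avoiding:
  assumes G: "G \<in> Gnd n d" and deg: "\<forall>i\<in>{1..n}. 3 \<le> d i" and vw: "{v,w} \<in> G"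
  obtains z where "{v,z} \<in> G" "z \<noteq> p" "z \<noteq> q"
proof -
  have v: "v \<in> {1..n}" using Gnd_edgeD[OF G vw] by auto
  have "\<exists>z. {v,z} \<in> G \<and> z \<noteq> p \<and> z \<noteq> q"
  proof (rule ccontr)
    assume none: "\<not> ?thesis"
    have "{e \<in> G. v \<in> e} \<subseteq> {{v,p},{v,q}}"
    proof
      fix e assume e: "e \<in> {e \<in> G. v \<in> e}"
      then have "card e = 2" "v \<in> e" using Gnd_edgeD[OF G] by auto
      then obtain z where "e = {v,z}" by (metis card_2_iff insert_commute insertE singletonD)
      then show "e \<in> {{v,p},{v,q}}" using none e by auto
    qed
    then have "d v \<le> card {{v,p},{v,q}}"
      using Gnd_degree[OF G v] card_mono by (metis finite.emptyI finite.insertI)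
    also have "\<dots> \<le> 2" by (simp add: card_insert_le_m1)
    finally show False using deg v by fastforce
  qed
  then show ?thesis using that by blast
qed

lemma card_incident_matching:
  assumes "{x1,x2} \<inter> {x3,x4} = {}"
  shows "card {e \<in> {{x1,x2},{x3,x4}}. i \<in> e} = of_bool (i \<in> {x1,x2,x3,x4})"
proof -
  have "{e \<in> {{x1,x2},{x3,x4}}. i \<in> e} =
      (if i \<in> {x1,x2} then {{x1,x2}} else if i \<in> {x3,x4} then {{x3,x4}} else {})"
    using assms by auto
  then show ?thesis using assms by auto
qed

lemma switch_graph_in_Gnd:
  assumes G: "G \<in> Gnd n d" and sw: "switchable G x1 x2 x3 x4"
  shows "switch_graph G x1 x2 x3 x4 \<in> Gnd n d"
proof -
  have dist: "distinct [x1,x2,x3,x4]" and old: "{x1,x2} \<in> G" "{x3,x4} \<in> G"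
    and new: "{x1,x3} \<notin> G" "{x2,x4} \<notin> G"
    using sw unfolding switchable_def by auto
  have "{x1,x2,x3,x4} \<subseteq> {1..n}" using Gnd_edgeD[OF G old(1)] Gnd_edgeD[OF G old(2)] by auto
  then have edges: "e \<subseteq> {1..n} \<and> card e = 2" if "e \<in> switch_graph G x1 x2 x3 x4" for e
    using that Gnd_edgeD[OF G] dist unfolding mem_switch_graph by auto
  have degree: "card {e \<in> switch_graph G x1 x2 x3 x4. i \<in> e} = d i" if i: "i \<in> {1..n}" for i
  proof -
    let ?I = "{e \<in> G. i \<in> e}"
    let ?R = "{e \<in> {{x1,x2},{x3,x4}}. i \<in> e}"
    let ?A = "{e \<in> {{x1,x3},{x2,x4}}. i \<in> e}"
    have fin: "finite ?I" using Gnd_finite[OF G] by simp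
    have R: "?R \<subseteq> ?I" and A: "(?I - ?R) \<inter> ?A = {}" using old new by auto
    have "card ?R = of_bool (i \<in> {x1,x2,x3,x4})"
      by (rule card_incident_matching) (use dist in auto)
    moreover have "card ?A = of_bool (i \<in> {x1,x3,x2,x4})"
      by (rule card_incident_matching) (use dist in auto)
    moreover have "{x1,x3,x2,x4} = {x1,x2,x3,x4}" by blast
    ultimately have "card ?A = card ?R" by simp
    have incident: "{e \<in> switch_graph G x1 x2 x3 x4. i \<in> e} = (?I - ?R) \<union> ?A"
      unfolding switch_graph_def by auto
    have "card {e \<in> switch_graph G x1 x2 x3 x4. i \<in> e} = card (?I - ?R) + card ?A"
      unfolding incident by (rule card_Un_disjoint[OF finite_Diff[OF fin] _ A]) simp
    also have "\<dots> = card ?I - card ?R + card ?A"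
      by (simp only: card_Diff_subset[OF finite_subset[OF R fin] R])
    also have "\<dots> = d i"
      using \<open>card ?A = card ?R\<close> card_mono[OF fin R] Gnd_degree[OF G i] by linarith
    finally show ?thesis .
  qed
  show ?thesis unfolding Gnd_def using edges degree by blast
qed

lemma triangle_switch_switch_graph:
  assumes G: "G \<in> Gnd n d" and sw: "switchable G x1 x2 x3 x4" and tri: "triangular G x1 x2 x3 x4"
  shows "triangle_switch n d G (switch_graph G x1 x2 x3 x4)"
proof -
  have dist: "distinct [x1,x2,x3,x4]" and old: "{x1,x2} \<in> G" "{x3,x4} \<in> G"
    and new: "{x1,x3} \<notin> G" "{x2,x4} \<notin> G"
    using sw unfolding switchable_def by auto
  have "{{x1,x3},{x2,x4}} \<noteq> {{x1,x2},{x3,x4}}"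
    using dist by (auto simp: doubleton_eq_iff)
  moreover have "{{x1,x3},{x2,x4}} \<inter> (G - {{x1,x2},{x3,x4}}) = {}"
    using new by blast
  ultimately have "switch_data n d G (switch_graph G x1 x2 x3 x4) x1 x2 x3 x4 {{x1,x3},{x2,x4}}"
    using G switch_graph_in_Gnd[OF G sw] dist old
    by (simp add: switch_data_def perfect_matchings4_def switch_graph_def)
  then show ?thesis
    using tri unfolding triangle_switch_def triangular_def switch_pairs_def by blast
qed

lemma switch_data_switchable:
  assumes "switch_data n d G H x1 x2 x3 x4 {{x1,x3},{x2,x4}}"
  shows "G \<in> Gnd n d" "switchable G x1 x2 x3 x4" "H = switch_graph G x1 x2 x3 x4"
proof -
  have dist: "distinct [x1,x2,x3,x4]" and old: "{x1,x2} \<in> G" "{x3,x4} \<in> G"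
    and disj: "{{x1,x3},{x2,x4}} \<inter> (G - {{x1,x2},{x3,x4}}) = {}"
    using assms by (simp_all add: switch_data_def)
  have "{x1,x3} \<notin> {{x1,x2},{x3,x4}}" "{x2,x4} \<notin> {{x1,x2},{x3,x4}}"
    using dist by (auto simp: doubleton_eq_iff)
  with disj have "{x1,x3} \<notin> G" "{x2,x4} \<notin> G" by blast+
  with dist old show "switchable G x1 x2 x3 x4" by (simp add: switchable_def)
  show "G \<in> Gnd n d" "H = switch_graph G x1 x2 x3 x4"
    using assms by (simp_all add: switch_data_def switch_graph_def)
qed

lemma ts_reachable_refl: "G \<in> Gnd n d \<Longrightarrow> ts_reachable n d m G G"
  unfolding ts_reachable_def ts_sim_path_def by (intro exI[of _ 0]) auto

lemma ts_reachable_mono: "ts_reachable n d m G H \<Longrightarrow> m \<le> m' \<Longrightarrow> ts_reachable n d m' G H"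
  unfolding ts_reachable_def by (meson order_trans)

lemma ts_reachable_Suc:
  assumes "triangle_switch n d G Y" and "ts_reachable n d m Y H"
  shows "ts_reachable n d (Suc m) G H"
proof -
  obtain \<kappa> X where "\<kappa> \<le> m" and X: "ts_sim_path n d Y H \<kappa> X"
    using assms(2) unfolding ts_reachable_def by blast
  have "G \<in> Gnd n d" using assms(1) unfolding triangle_switch_def switch_data_def by blast
  then have "ts_sim_path n d G H (Suc \<kappa>) (case_nat G X)"
    using assms(1) X unfolding ts_sim_path_def by (auto split: nat.split)
  then show ?thesis using \<open>\<kappa> \<le> m\<close> unfolding ts_reachable_def by (intro exI[of _ "Suc \<kappa>"]) auto
qed

lemma ts_reachable_switch:
  assumes "G \<in> Gnd n d" "switchable G x1 x2 x3 x4" "triangular G x1 x2 x3 x4"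
    and "ts_reachable n d m (switch_graph G x1 x2 x3 x4) H"
  shows "ts_reachable n d (Suc m) G H"
  using ts_reachable_Suc triangle_switch_switch_graph assms by blast

lemma ts_reachable_switch1:
  assumes G: "G \<in> Gnd n d" and "switchable G x1 x2 x3 x4" "triangular G x1 x2 x3 x4"
  shows "ts_reachable n d 1 G (switch_graph G x1 x2 x3 x4)"
  using ts_reachable_switch[OF assms ts_reachable_refl] switch_graph_in_Gnd[OF G] assms(2) by simp

text \<open>Switch onto the two diagonals, then from the diagonals onto the target matching.\<close>

lemma ts_reachable_via_diagonal:
  assumes G: "G \<in> Gnd n d" and sw: "switchable G p1 p2 p3 p4"
    and diag: "{p1,p4} \<notin> G" "{p2,p3} \<notin> G"
    and c: "c \<notin> {p1,p2,p3,p4}" "{p1,c} \<in> G" "{p4,c} \<in> G"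
  shows "ts_reachable n d 2 G (switch_graph G p1 p2 p3 p4)"
proof -
  have dist: "distinct [p1,p2,p3,p4]" and old: "{p1,p2} \<in> G" "{p3,p4} \<in> G"
    and new: "{p1,p3} \<notin> G" "{p2,p4} \<notin> G"
    using sw unfolding switchable_def by auto
  let ?G1 = "switch_graph G p1 p2 p4 p3"
  have sw1: "switchable G p1 p2 p4 p3"
    using dist old diag by (auto simp: switchable_def insert_commute)
  have tri1: "triangular G p1 p2 p4 p3"
    by (rule triangularI[where x=p1 and y=p4 and c=c]) (use c in \<open>auto simp: switch_pairs_def\<close>)
  have sw2: "switchable ?G1 p1 p4 p3 p2"
    using dist old new diag unfolding switchable_def mem_switch_graph
    by (auto simp: doubleton_eq_iff insert_commute)
  have tri2: "triangular ?G1 p1 p4 p3 p2"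
    by (rule triangularI[where x=p1 and y=p4 and c=c])
      (use c dist in \<open>auto simp: switch_pairs_def mem_switch_graph doubleton_eq_iff\<close>)
  have "switch_graph ?G1 p1 p4 p3 p2 = switch_graph G p1 p2 p3 p4"
    using dist old new diag unfolding switch_graph_def
    by (auto simp: doubleton_eq_iff insert_commute)
  moreover have "switch_graph G p1 p2 p4 p3 \<in> Gnd n d" using switch_graph_in_Gnd[OF G sw1] .
  ultimately show ?thesis
    using ts_reachable_switch[OF G sw1 tri1 ts_reachable_switch1[OF _ sw2 tri2]]
    by (simp add: numeral_2_eq_2)
qed

text \<open>Exchange p1p2, p3z for p1p3, p2z, then p2z, p3p4 for p3z, p2p4.\<close>

lemma ts_reachable_via_vertex:
  assumes G: "G \<in> Gnd n d" and sw: "switchable G p1 p2 p3 p4"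
    and z: "z \<notin> {p1,p2,p3,p4}" "{p3,z} \<in> G" "{p2,z} \<notin> G"
    and tri1: "triangular G p1 p2 p3 z"
    and tri2: "triangular (switch_graph G p1 p2 p3 z) z p2 p3 p4"
  shows "ts_reachable n d 2 G (switch_graph G p1 p2 p3 p4)"
proof -
  have dist: "distinct [p1,p2,p3,p4]" and old: "{p1,p2} \<in> G" "{p3,p4} \<in> G"
    and new: "{p1,p3} \<notin> G" "{p2,p4} \<notin> G"
    using sw unfolding switchable_def by auto
  have sw1: "switchable G p1 p2 p3 z"
    using dist z old new by (auto simp: switchable_def insert_commute)
  have sw2: "switchable (switch_graph G p1 p2 p3 z) z p2 p3 p4"
    using dist z old new unfolding switchable_def mem_switch_graph
    by (auto simp: doubleton_eq_iff insert_commute)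
  have "switch_graph (switch_graph G p1 p2 p3 z) z p2 p3 p4 = switch_graph G p1 p2 p3 p4"
    using dist z old new unfolding switch_graph_def
    by (auto simp: doubleton_eq_iff insert_commute)
  moreover have "switch_graph G p1 p2 p3 z \<in> Gnd n d" using switch_graph_in_Gnd[OF G sw1] .
  ultimately show ?thesis
    using ts_reachable_switch[OF G sw1 tri1 ts_reachable_switch1[OF _ sw2 tri2]]
    by (simp add: numeral_2_eq_2)
qed

lemma conjugate_by_disjoint_exchange:
  assumes "R1 \<subseteq> G" "A1 \<inter> G = {}" "(R1 \<union> A1) \<inter> (R2 \<union> A2) = {}"
  shows "((G - R1 \<union> A1) - R2 \<union> A2) - A1 \<union> R1 = G - R2 \<union> A2"
  using assms by blast

text \<open>The switch on s1 s3 s2 s4 undoes the switch on s1 s2 s3 s4.\<close>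

lemma ts_reachable_conjugate:
  assumes G: "G \<in> Gnd n d" and sw: "switchable G p1 p2 p3 p4" and sws: "switchable G s1 s2 s3 s4"
    and disj: "switch_pairs s1 s2 s3 s4 \<inter> switch_pairs p1 p2 p3 p4 = {}"
    and tri1: "triangular G s1 s2 s3 s4"
    and tri2: "triangular (switch_graph G s1 s2 s3 s4) p1 p2 p3 p4"
    and tri3: "triangular (switch_graph (switch_graph G s1 s2 s3 s4) p1 p2 p3 p4) s1 s3 s2 s4"
  shows "ts_reachable n d 3 G (switch_graph G p1 p2 p3 p4)"
proof -
  let ?G1 = "switch_graph G s1 s2 s3 s4"
  let ?G2 = "switch_graph ?G1 p1 p2 p3 p4"
  have dist: "distinct [s1,s2,s3,s4]" and old: "{s1,s2} \<in> G" "{s3,s4} \<in> G"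
    and new: "{s1,s3} \<notin> G" "{s2,s4} \<notin> G"
    using sws unfolding switchable_def by auto
  have "e \<notin> switch_pairs p1 p2 p3 p4" if "e \<in> switch_pairs s1 s2 s3 s4" for e
    using disj that by blast
  then have "{s1,s2} \<notin> switch_pairs p1 p2 p3 p4" "{s3,s4} \<notin> switch_pairs p1 p2 p3 p4"
    "{s1,s3} \<notin> switch_pairs p1 p2 p3 p4" "{s2,s4} \<notin> switch_pairs p1 p2 p3 p4"
    by (simp_all add: switch_pairs_def[of s1 s2 s3 s4])
  then have sep:
    "{s1,s2} \<noteq> {p1,p3}" "{s1,s2} \<noteq> {p2,p4}" "{s3,s4} \<noteq> {p1,p3}" "{s3,s4} \<noteq> {p2,p4}"
    "{s1,s3} \<noteq> {p1,p2}" "{s1,s3} \<noteq> {p3,p4}" "{s2,s4} \<noteq> {p1,p2}" "{s2,s4} \<noteq> {p3,p4}"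
    "{s1,s2} \<noteq> {p1,p2}" "{s3,s4} \<noteq> {p1,p2}" "{s1,s2} \<noteq> {p3,p4}" "{s3,s4} \<noteq> {p3,p4}"
    "{s1,s3} \<noteq> {p1,p3}" "{s2,s4} \<noteq> {p1,p3}" "{s1,s3} \<noteq> {p2,p4}" "{s2,s4} \<noteq> {p2,p4}"
    by (simp_all add: switch_pairs_def)
  have "{s1,s2} \<noteq> {s1,s3}" "{s1,s2} \<noteq> {s2,s4}" "{s3,s4} \<noteq> {s1,s3}" "{s3,s4} \<noteq> {s2,s4}"
    using dist by (auto simp: doubleton_eq_iff)
  then have sw3: "switchable ?G2 s1 s3 s2 s4"
    using dist old new sep unfolding switchable_def mem_switch_graph by auto
  have sw2: "switchable ?G1 p1 p2 p3 p4"
    using sw sep[symmetric] unfolding switchable_def mem_switch_graph by auto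
  have "switch_graph ?G2 s1 s3 s2 s4 = switch_graph G p1 p2 p3 p4"
    unfolding switch_graph_def
    by (rule conjugate_by_disjoint_exchange) (use old new disj in \<open>auto simp: switch_pairs_def\<close>)
  moreover have "?G1 \<in> Gnd n d" "?G2 \<in> Gnd n d"
    using switch_graph_in_Gnd G sws sw2 by blast+
  ultimately show ?thesis
    using ts_reachable_switch[OF G sws tri1
        ts_reachable_switch[OF _ sw2 tri2 ts_reachable_switch1[OF _ sw3 tri3]]]
    by (simp add: numeral_3_eq_3)
qed

lemma ts_reachable_common_nbr:
  assumes G: "G \<in> Gnd n d" and sw: "switchable G p1 p2 p3 p4"
    and diag: "{p1,p4} \<notin> G" "{p2,p3} \<notin> G"
    and xy: "x \<in> {p1,p2,p3,p4}" "y \<in> {p1,p2,p3,p4}" "x \<noteq> y"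
    and c: "c \<notin> {p1,p2,p3,p4}" "{x,c} \<in> G" "{y,c} \<in> G"
  shows "ts_reachable n d 2 G (switch_graph G p1 p2 p3 p4)"
proof -
  have "{x,y} \<in> switch_pairs p1 p2 p3 p4 \<or> {x,y} = {p1,p4} \<or> {x,y} = {p2,p3}"
    using xy by (elim insertE emptyE; simp add: switch_pairs_def insert_commute)
  moreover have "ts_reachable n d 2 G (switch_graph G p1 p2 p3 p4)"
    if "{x,y} \<in> switch_pairs p1 p2 p3 p4"
    using ts_reachable_switch1[OF G sw triangularI[OF that c]] ts_reachable_mono by simp
  moreover have "ts_reachable n d 2 G (switch_graph G p1 p2 p3 p4)" if "{x,y} = {p1,p4}"
    using ts_reachable_via_diagonal[OF G sw diag, of c] c that by (auto simp: doubleton_eq_iff)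
  moreover have "ts_reachable n d 2 G (switch_graph G p1 p2 p3 p4)" if "{x,y} = {p2,p3}"
    using ts_reachable_via_diagonal[OF G switchable_swap[OF sw], of c] diag c that
    by (auto simp: doubleton_eq_iff insert_commute switch_graph_swap)
  ultimately show ?thesis by blast
qed

lemma ts_reachable_triangle:
  assumes G: "G \<in> Gnd n d" and sw: "switchable G p1 p2 p3 p4"
    and uw: "u \<notin> {p1,p2,p3,p4}" "w \<notin> {p1,p2,p3,p4}"
    and tri: "{p3,u} \<in> G" "{p3,w} \<in> G" "{u,w} \<in> G" and u: "{p2,u} \<notin> G"
  shows "ts_reachable n d 2 G (switch_graph G p1 p2 p3 p4)"
proof (rule ts_reachable_via_vertex[OF G sw uw(1) tri(1) u])
  have dist: "distinct [p1,p2,p3,p4]" using sw unfolding switchable_def by blast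
  have "u \<noteq> w" using Gnd_edge_neq[OF G tri(3)] .
  show "triangular G p1 p2 p3 u"
    by (rule triangularI[where x=p3 and y=u and c=w])
      (use uw tri \<open>u \<noteq> w\<close> in \<open>auto simp: switch_pairs_def insert_commute\<close>)
  show "triangular (switch_graph G p1 p2 p3 u) u p2 p3 p4"
    by (rule triangularI[where x=u and y=p3 and c=w])
      (use dist uw tri \<open>u \<noteq> w\<close> in
        \<open>auto simp: switch_pairs_def mem_switch_graph doubleton_eq_iff insert_commute\<close>)
qed

lemma ts_reachable_triangle_at:
  assumes G: "G \<in> Gnd n d" and sw: "switchable G (a 1) (a 2) (a 3) (a 4)" and j: "j \<in> {1..4::nat}"
    and uw: "u \<notin> {a 1, a 2, a 3, a 4}" "w \<notin> {a 1, a 2, a 3, a 4}"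
    and tri: "{a j, u} \<in> G" "{a j, w} \<in> G" "{u,w} \<in> G" and u: "{a (5 - j), u} \<notin> G"
  shows "ts_reachable n d 2 G (switch_graph G (a 1) (a 2) (a 3) (a 4))"
proof -
  have "j = 1 \<or> j = 2 \<or> j = 3 \<or> j = 4" using j by auto
  then show ?thesis
  proof (elim disjE)
    assume "j = 1"
    then show ?thesis
      using ts_reachable_triangle[OF G switchable_rotate[OF sw], of u w] uw tri u
      by (simp add: switch_graph_rotate insert_commute)
  next
    assume "j = 2"
    then show ?thesis
      using ts_reachable_triangle[OF G switchable_swap[OF switchable_rotate[OF sw]], of u w]
        uw tri u
      by (simp add: switch_graph_rotate switch_graph_swap insert_commute)
  next
    assume "j = 3"
    then show ?thesis using ts_reachable_triangle[OF G sw, of u w] uw tri u by simp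
  next
    assume "j = 4"
    then show ?thesis
      using ts_reachable_triangle[OF G switchable_swap[OF sw], of u w] uw tri u
      by (simp add: switch_graph_swap insert_commute)
  qed
qed

lemma ts_reachable_diagonal_edge_common_nbr:
  assumes G: "G \<in> Gnd n d" and deg: "\<forall>i\<in>{1..n}. 3 \<le> d i" and sw: "switchable G p1 p2 p3 p4"
    and e14: "{p1,p4} \<in> G" and z: "z \<notin> {p1,p2,p3,p4}"
    and e3z: "{p3,z} \<in> G" and e2z: "{p2,z} \<in> G" and n1z: "{p1,z} \<notin> G" and n4z: "{p4,z} \<notin> G"
  shows "ts_reachable n d 3 G (switch_graph G p1 p2 p3 p4)"
proof -
  have dist: "distinct [p1,p2,p3,p4]" and e12: "{p1,p2} \<in> G" and e34: "{p3,p4} \<in> G"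
    and n13: "{p1,p3} \<notin> G" and n24: "{p2,p4} \<notin> G"
    using sw unfolding switchable_def by auto
  obtain y where ezy: "{z,y} \<in> G" and "y \<noteq> p2" "y \<noteq> p3"
    using exists_nbr_avoiding[OF G deg, of z p3] e3z by (metis insert_commute)
  moreover have "y \<noteq> p1" "y \<noteq> p4" using ezy n1z n4z by (auto simp: insert_commute)
  ultimately have y: "y \<notin> {p1,p2,p3,p4}" by auto
  have zy: "z \<noteq> y" using Gnd_edge_neq[OF G ezy] .
  consider "{p1,y} \<notin> G" | "{p1,y} \<in> G" "{p4,y} \<notin> G" | "{p4,y} \<in> G" "{p3,y} \<in> G"
    | "{p1,y} \<in> G" "{p4,y} \<in> G" "{p3,y} \<notin> G"
    by blast
  then show ?thesis
  proof cases
    case 1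
    show ?thesis
    proof (rule ts_reachable_conjugate[OF G sw, of p4 p1 z y])
      show "switchable G p4 p1 z y"
        using dist z y zy e14 ezy n4z 1 by (auto simp: switchable_def insert_commute)
      show "switch_pairs p4 p1 z y \<inter> switch_pairs p1 p2 p3 p4 = {}"
        using dist z y by (auto simp: switch_pairs_def doubleton_eq_iff)
      show "triangular G p4 p1 z y"
        by (rule triangularI[where x=p4 and y=z and c=p3])
          (use dist z y e34 e3z in \<open>auto simp: switch_pairs_def insert_commute\<close>)
      show "triangular (switch_graph G p4 p1 z y) p1 p2 p3 p4"
        by (rule triangularI[where x=p3 and y=p4 and c=z])
          (use dist z y zy e3z in
            \<open>auto simp: switch_pairs_def mem_switch_graph doubleton_eq_iff insert_commute\<close>)
      show "triangular (switch_graph (switch_graph G p4 p1 z y) p1 p2 p3 p4) p4 z p1 y"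
        by (rule triangularI[where x=p4 and y=z and c=p2])
          (use dist z y zy e2z in
            \<open>auto simp: switch_pairs_def mem_switch_graph doubleton_eq_iff insert_commute\<close>)
    qed
  next
    case 2
    show ?thesis
    proof (rule ts_reachable_conjugate[OF G sw, of p1 p4 z y])
      show "switchable G p1 p4 z y"
        using dist z y zy e14 ezy n1z 2 by (auto simp: switchable_def insert_commute)
      show "switch_pairs p1 p4 z y \<inter> switch_pairs p1 p2 p3 p4 = {}"
        using dist z y by (auto simp: switch_pairs_def doubleton_eq_iff)
      show "triangular G p1 p4 z y"
        by (rule triangularI[where x=p1 and y=z and c=p2])
          (use dist z y e12 e2z in \<open>auto simp: switch_pairs_def insert_commute\<close>)
      show "triangular (switch_graph G p1 p4 z y) p1 p2 p3 p4"
        by (rule triangularI[where x=p1 and y=p3 and c=z])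
          (use dist z y zy e3z in
            \<open>auto simp: switch_pairs_def mem_switch_graph doubleton_eq_iff insert_commute\<close>)
      show "triangular (switch_graph (switch_graph G p1 p4 z y) p1 p2 p3 p4) p1 z p4 y"
        by (rule triangularI[where x=p1 and y=z and c=p3])
          (use dist z y zy e3z in
            \<open>auto simp: switch_pairs_def mem_switch_graph doubleton_eq_iff insert_commute\<close>)
    qed
  next
    case 3
    have "triangular G p1 p2 p3 p4"
      by (rule triangularI[where x=p3 and y=p4 and c=y]) (use y 3 in \<open>auto simp: switch_pairs_def\<close>)
    then show ?thesis using ts_reachable_switch1[OF G sw] ts_reachable_mono by simp
  next
    case 4
    show ?thesis
    proof (rule ts_reachable_conjugate[OF G sw, of p3 z y p1])
      show "switchable G p3 z y p1"
        using dist z y zy e3z 4 n1z by (auto simp: switchable_def insert_commute)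
      show "switch_pairs p3 z y p1 \<inter> switch_pairs p1 p2 p3 p4 = {}"
        using dist z y by (auto simp: switch_pairs_def doubleton_eq_iff)
      show "triangular G p3 z y p1"
        by (rule triangularI[where x=y and y=p1 and c=p4])
          (use dist z y e14 4 in \<open>auto simp: switch_pairs_def insert_commute\<close>)
      show "triangular (switch_graph G p3 z y p1) p1 p2 p3 p4"
        by (rule triangularI[where x=p3 and y=p4 and c=y])
          (use dist z y zy 4 in
            \<open>auto simp: switch_pairs_def mem_switch_graph doubleton_eq_iff insert_commute\<close>)
      show "triangular (switch_graph (switch_graph G p3 z y p1) p1 p2 p3 p4) p3 y z p1"
        by (rule triangularI[where x=y and y=p1 and c=p4])
          (use dist z y zy e14 4 in
            \<open>auto simp: switch_pairs_def mem_switch_graph doubleton_eq_iff insert_commute\<close>)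
    qed
  qed
qed

lemma ts_reachable_diagonal_edge:
  assumes G: "G \<in> Gnd n d" and deg: "\<forall>i\<in>{1..n}. 3 \<le> d i" and sw: "switchable G p1 p2 p3 p4"
    and e14: "{p1,p4} \<in> G"
  shows "ts_reachable n d 3 G (switch_graph G p1 p2 p3 p4)"
proof -
  have dist: "distinct [p1,p2,p3,p4]" and e34: "{p3,p4} \<in> G" and n13: "{p1,p3} \<notin> G"
    using sw unfolding switchable_def by auto
  obtain z where e3z: "{p3,z} \<in> G" and "z \<noteq> p2" "z \<noteq> p4"
    using exists_nbr_avoiding[OF G deg e34] by blast
  moreover have "z \<noteq> p1" using e3z n13 by (auto simp: insert_commute)
  moreover have "z \<noteq> p3" using Gnd_edge_neq[OF G e3z] by simp
  ultimately have z: "z \<notin> {p1,p2,p3,p4}" by auto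
  consider "{p2,z} \<notin> G" | "{p1,z} \<in> G \<or> {p4,z} \<in> G" "{p2,z} \<in> G"
    | "{p2,z} \<in> G" "{p1,z} \<notin> G" "{p4,z} \<notin> G"
    by blast
  then show ?thesis
  proof cases
    case 1
    have "ts_reachable n d 2 G (switch_graph G p1 p2 p3 p4)"
    proof (rule ts_reachable_via_vertex[OF G sw z e3z 1])
      show "triangular G p1 p2 p3 z"
        by (rule triangularI[where x=p1 and y=p3 and c=p4])
          (use dist z e14 e34 in \<open>auto simp: switch_pairs_def insert_commute\<close>)
      show "triangular (switch_graph G p1 p2 p3 z) z p2 p3 p4"
        by (rule triangularI[where x=p3 and y=p4 and c=p1])
          (use dist z e14 in
            \<open>auto simp: switch_pairs_def mem_switch_graph doubleton_eq_iff insert_commute\<close>)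
    qed
    then show ?thesis using ts_reachable_mono by simp
  next
    case 2
    then have "triangular G p1 p2 p3 p4"
      using z e3z by (auto intro: triangularI[where c=z] simp: switch_pairs_def)
    then show ?thesis using ts_reachable_switch1[OF G sw] ts_reachable_mono by simp
  next
    case 3
    then show ?thesis using ts_reachable_diagonal_edge_common_nbr[OF G deg sw e14 z e3z] by blast
  qed
qed

lemma ts_reachable_diagonal_edges:
  assumes "G \<in> Gnd n d" "\<forall>i\<in>{1..n}. 3 \<le> d i" "switchable G p1 p2 p3 p4"
    and "{p1,p4} \<in> G \<or> {p2,p3} \<in> G"
  shows "ts_reachable n d 3 G (switch_graph G p1 p2 p3 p4)"
  using assms ts_reachable_diagonal_edge[of G n d p2 p1 p4 p3] ts_reachable_diagonal_edge
  by (auto simp: switchable_swap switch_graph_swap insert_commute)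

theorem lemma1:
  fixes n :: nat and d :: "nat \<Rightarrow> nat" and G H :: graph and a :: "nat \<Rightarrow> nat"
  assumes "graphical n d"
    and "\<forall>i\<in>{1..n}. 3 \<le> d i"
    and "switch_data n d G H (a 1) (a 2) (a 3) (a 4) {{a 1, a 3}, {a 2, a 4}}"
    and "({a 1, a 4} \<in> G \<or> {a 2, a 3} \<in> G)
      \<or> ({a 1, a 4} \<notin> G \<and> {a 2, a 3} \<notin> G \<and>
         (\<exists>x\<in>a ` {1..4}. \<exists>y\<in>a ` {1..4}. x \<noteq> y \<and>
            (\<exists>c\<in>{1..n} - a ` {1..4}. c \<in> nbhd G x \<and> c \<in> nbhd G y)))
      \<or> (\<exists>j\<in>{1..4::nat}. \<exists>u w. {a j, u} \<in> G \<and> {a j, w} \<in> G \<and> {u, w} \<in> G \<and>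
            u \<notin> a ` {1..4} \<and> w \<notin> a ` {1..4} \<and>
            u \<notin> nbhd G (a (5 - j)) - a ` {1..4})"
  shows "\<exists>\<kappa> X. \<kappa> \<le> 4 \<and> ts_sim_path n d G H \<kappa> X"
proof -
  have G: "G \<in> Gnd n d" and sw: "switchable G (a 1) (a 2) (a 3) (a 4)"
    and H: "H = switch_graph G (a 1) (a 2) (a 3) (a 4)"
    using switch_data_switchable[OF assms(3)] by blast+
  have D: "a ` {1..4} = {a 1, a 2, a 3, a 4}"
    by (auto simp: atLeastAtMost_iff le_Suc_eq numeral_eq_Suc)
  from assms(4) consider (diagonal) "{a 1, a 4} \<in> G \<or> {a 2, a 3} \<in> G"
    | (common_nbr) x y c where "{a 1, a 4} \<notin> G" "{a 2, a 3} \<notin> G" "x \<in> a ` {1..4}"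
        "y \<in> a ` {1..4}" "x \<noteq> y" "c \<notin> a ` {1..4}" "c \<in> nbhd G x" "c \<in> nbhd G y"
    | (triangle) j u w where "j \<in> {1..4}" "{a j, u} \<in> G" "{a j, w} \<in> G" "{u, w} \<in> G"
        "u \<notin> a ` {1..4}" "w \<notin> a ` {1..4}" "u \<notin> nbhd G (a (5 - j))"
    by blast
  then have "ts_reachable n d 3 G H"
  proof cases
    case diagonal
    then show ?thesis unfolding H by (rule ts_reachable_diagonal_edges[OF G assms(2) sw])
  next
    case common_nbr
    then show ?thesis unfolding H D nbhd_def
      by (intro ts_reachable_mono[OF ts_reachable_common_nbr[OF G sw, of x y c]]) auto
  next
    case triangle
    then show ?thesis unfolding H D nbhd_def
      by (intro ts_reachable_mono[OF ts_reachable_triangle_at[OF G sw, of j u w]]) auto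
  qed
  then show ?thesis using ts_reachable_mono[of n d 3 G H 4] unfolding ts_reachable_def by simp
qed

end
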